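(* Let $G$ be a finite simple graph with $n$ vertices and minimum degree $\delta \ge 24{,}000$. Then $$\gamma_s(G) \le \frac{\sqrt{6.8\ln(\delta+1)} + 0.32}{\sqrt{\delta+1}}\, n.$$
   Context: For a vertex $v$ of $G$, $N[v]$ denotes the closed neighbourhood of $v$ (i.e. $v$ together with its neighbours). A signed domination function of $G$ is a function $f: V(G) \to \{-1, 1\}$ such that $\sum_{x \in N[v]} f(x) \ge 1$ for every vertex $v \in V(G)$. The weight of $f$ is $f(V(G)) = \sum_{v \in V(G)} f(v)$. The signed domination number $\gamma_s(G)$ is the minimum weight of a signed domination function of $G$. *)

theory Defs
  imports Complex_Main
begin

definition simple_graph :: "'a set \<Rightarrow> ('a \<Rightarrow> 'a \<Rightarrow> bool) \<Rightarrow> bool" where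
  "simple_graph V E \<longleftrightarrow> finite V \<and> (\<forall>x y. E x y \<longrightarrow> x \<in> V \<and> y \<in> V)
     \<and> (\<forall>x y. E x y \<longrightarrow> E y x) \<and> (\<forall>x. \<not> E x x)"

definition neighbours :: "'a set \<Rightarrow> ('a \<Rightarrow> 'a \<Rightarrow> bool) \<Rightarrow> 'a \<Rightarrow> 'a set" where
  "neighbours V E v = {u \<in> V. E v u}"

definition closed_nbhd :: "'a set \<Rightarrow> ('a \<Rightarrow> 'a \<Rightarrow> bool) \<Rightarrow> 'a \<Rightarrow> 'a set" where
  "closed_nbhd V E v = insert v (neighbours V E v)"

definition degree :: "'a set \<Rightarrow> ('a \<Rightarrow> 'a \<Rightarrow> bool) \<Rightarrow> 'a \<Rightarrow> nat" where
  "degree V E v = card (neighbours V E v)"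

definition min_degree :: "'a set \<Rightarrow> ('a \<Rightarrow> 'a \<Rightarrow> bool) \<Rightarrow> nat" where
  "min_degree V E = Min (degree V E ` V)"

definition signed_dom_fun :: "'a set \<Rightarrow> ('a \<Rightarrow> 'a \<Rightarrow> bool) \<Rightarrow> ('a \<Rightarrow> int) \<Rightarrow> bool" where
  "signed_dom_fun V E f \<longleftrightarrow> (\<forall>v\<in>V. f v \<in> {-1, 1})
     \<and> (\<forall>v\<in>V. (\<Sum>x\<in>closed_nbhd V E v. f x) \<ge> 1)"

definition signed_domination_number :: "'a set \<Rightarrow> ('a \<Rightarrow> 'a \<Rightarrow> bool) \<Rightarrow> int" where
  "signed_domination_number V E =
     (LEAST w. \<exists>f. signed_dom_fun V E f \<and> w = (\<Sum>v\<in>V. f v))"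

end

theory Submission
  imports Defs
begin

text \<open>Label each vertex \<open>1\<close> independently with probability \<open>p = (1 + y)/2\<close> and \<open>-1\<close>
  otherwise, then repair every closed neighbourhood whose label sum \<open>s\<close> is non-positive by
  switching \<open>\<lceil>(1 - s)/2\<rceil>\<close> of its \<open>-1\<close> labels, at a cost of at most
  \<open>2 - s \<le> exp (y (2 - s) - 1) / y\<close>. The expected label is \<open>y\<close>, and since every closed
  neighbourhood has at least \<open>\<delta> + 1\<close> vertices, the expected repair cost at a vertex is at most
  \<open>q ^ (\<delta> + 1) / y\<close> with \<open>q = p exp (-y) + (1 - p) exp y \<le> 1 - y\<^sup>2/4\<close>. Some labelling does
  no worse than the expectation, and \<open>y = \<surd>(6.8 ln (\<delta> + 1) / (\<delta> + 1))\<close> gives the bound.\<close>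

lemma closed_nbhd_subset: "v \<in> V \<Longrightarrow> closed_nbhd V E v \<subseteq> V"
  unfolding closed_nbhd_def neighbours_def by auto

lemma finite_closed_nbhd: "finite V \<Longrightarrow> finite (closed_nbhd V E v)"
  unfolding closed_nbhd_def neighbours_def by auto

lemma card_closed_nbhd_ge_min_degree:
  assumes "simple_graph V E" and "v \<in> V"
  shows "min_degree V E + 1 \<le> card (closed_nbhd V E v)"
proof -
  have finV: "finite V" using assms(1) unfolding simple_graph_def by auto
  have "min_degree V E \<le> degree V E v"
    unfolding min_degree_def using assms(2) finV by simp
  moreover have "v \<notin> neighbours V E v"
    using assms(1) unfolding simple_graph_def neighbours_def by auto
  moreover have "finite (neighbours V E v)" using finV unfolding neighbours_def by simp
  ultimately show ?thesis unfolding closed_nbhd_def degree_def by simp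
qed

lemma signed_dom_fun_sum_abs_le:
  assumes "finite V" and "signed_dom_fun V E f"
  shows "\<bar>\<Sum>v\<in>V. f v\<bar> \<le> int (card V)"
proof -
  have "\<bar>\<Sum>v\<in>V. f v\<bar> \<le> (\<Sum>v\<in>V. \<bar>f v\<bar>)" by (rule sum_abs)
  also have "\<dots> = (\<Sum>v\<in>V. 1)"
    using assms(2) unfolding signed_dom_fun_def by (intro sum.cong) auto
  finally show ?thesis by simp
qed

lemma signed_domination_number_le:
  assumes "finite V" and "signed_dom_fun V E f"
  shows "signed_domination_number V E \<le> (\<Sum>v\<in>V. f v)"
proof -
  define W where "W = {w. \<exists>f. signed_dom_fun V E f \<and> w = (\<Sum>v\<in>V. f v)}"
  have "W \<subseteq> {- int (card V) .. int (card V)}"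
    using signed_dom_fun_sum_abs_le[OF assms(1)] unfolding W_def by (force simp: abs_le_iff)
  hence finW: "finite W" using finite_subset by blast
  have inW: "(\<Sum>v\<in>V. f v) \<in> W" using assms(2) unfolding W_def by auto
  have "signed_domination_number V E = Min W"
    unfolding signed_domination_number_def W_def[symmetric]
  proof (rule Least_equality)
    show "\<exists>f. signed_dom_fun V E f \<and> Min W = (\<Sum>v\<in>V. f v)"
      using Min_in[OF finW] inW unfolding W_def by auto
  next
    fix w assume "\<exists>f. signed_dom_fun V E f \<and> w = (\<Sum>v\<in>V. f v)"
    thus "Min W \<le> w" using finW unfolding W_def by simp
  qed
  thus ?thesis using finW inW by simp
qed

section \<open>Repairing a \<open>\<plusminus>1\<close> labelling\<close>

definition signed_indicator :: "'a set \<Rightarrow> 'a \<Rightarrow> int" where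
  "signed_indicator S x = (if x \<in> S then 1 else -1)"

definition closed_nbhd_sum :: "'a set \<Rightarrow> ('a \<Rightarrow> 'a \<Rightarrow> bool) \<Rightarrow> ('a \<Rightarrow> int) \<Rightarrow> 'a \<Rightarrow> int" where
  "closed_nbhd_sum V E f v = (\<Sum>x\<in>closed_nbhd V E v. f x)"

text \<open>Raising \<open>\<lceil>(1 - s)/2\<rceil>\<close> labels of a closed neighbourhood with sum \<open>s \<le> 0\<close> from
  \<open>-1\<close> to \<open>1\<close> costs at most \<open>2 - s\<close> in total weight.\<close>

definition repair_cost :: "'a set \<Rightarrow> ('a \<Rightarrow> 'a \<Rightarrow> bool) \<Rightarrow> ('a \<Rightarrow> int) \<Rightarrow> 'a \<Rightarrow> int" where
  "repair_cost V E f v =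
     (if closed_nbhd_sum V E f v \<le> 0 then 2 - closed_nbhd_sum V E f v else 0)"

lemma sum_signed_indicator:
  assumes "finite A"
  shows "(\<Sum>x\<in>A. signed_indicator S x) = int (card A) - 2 * int (card (A - S))"
proof -
  have "(\<Sum>x\<in>A. signed_indicator S x) = int (card (A \<inter> S)) - int (card (A - S))"
    using assms by (simp add: signed_indicator_def sum.If_cases Diff_eq)
  moreover have "card (A \<inter> S) + card (A - S) = card A"
    using assms by (metis card_Int_Diff)
  ultimately show ?thesis by linarith
qed

lemma sum_signed_indicator_Un:
  assumes "finite A" and "S \<inter> T = {}"
  shows "(\<Sum>x\<in>A. signed_indicator (S \<union> T) x)
       = (\<Sum>x\<in>A. signed_indicator S x) + 2 * int (card (A \<inter> T))"
proof -
  have "(\<Sum>x\<in>A. signed_indicator (S \<union> T) x)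
      = (\<Sum>x\<in>A. signed_indicator S x + (if x \<in> T then 2 else 0))"
    using assms(2) by (intro sum.cong) (auto simp: signed_indicator_def)
  also have "\<dots> = (\<Sum>x\<in>A. signed_indicator S x) + 2 * int (card (A \<inter> T))"
    using assms(1) by (simp add: sum.distrib sum.If_cases)
  finally show ?thesis .
qed

lemma signed_dom_fun_signed_indicator_iff:
  "signed_dom_fun V E (signed_indicator S) \<longleftrightarrow> (\<forall>v\<in>V. 1 \<le> closed_nbhd_sum V E (signed_indicator S) v)"
  unfolding signed_dom_fun_def closed_nbhd_sum_def by (auto simp: signed_indicator_def)

lemma repair_cost_nonneg: "0 \<le> repair_cost V E f v"
  unfolding repair_cost_def by simp

lemma one_le_closed_nbhd_sum_add_repair_cost:
  "1 \<le> closed_nbhd_sum V E f v + 2 * (repair_cost V E f v div 2)"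
  unfolding repair_cost_def by presburger

lemma repair_cost_signed_indicator_div_2_le:
  assumes "finite V"
  shows "repair_cost V E (signed_indicator S) v div 2 \<le> int (card (closed_nbhd V E v - S))"
proof -
  let ?N = "closed_nbhd V E v"
  have "closed_nbhd_sum V E (signed_indicator S) v = int (card ?N) - 2 * int (card (?N - S))"
    unfolding closed_nbhd_sum_def by (rule sum_signed_indicator[OF finite_closed_nbhd[OF assms]])
  moreover have "1 \<le> card ?N"
    using finite_closed_nbhd[OF assms, of E v] unfolding closed_nbhd_def
    by (simp add: Suc_leI card_gt_0_iff)
  ultimately show ?thesis unfolding repair_cost_def by presburger
qed

lemma exists_signed_dom_fun_le_repair_cost:
  assumes finV: "finite V"
  shows "\<exists>f. signed_dom_fun V E f \<and>
           (\<Sum>v\<in>V. f v) \<le> (\<Sum>v\<in>V. signed_indicator S v) + (\<Sum>v\<in>V. repair_cost V E (signed_indicator S) v)"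
proof -
  let ?N = "closed_nbhd V E"
  let ?c = "repair_cost V E (signed_indicator S)"
  define k where "k v = nat (?c v div 2)" for v
  have k: "int (k v) = ?c v div 2" for v
    unfolding k_def using repair_cost_nonneg[of V E "signed_indicator S" v] by simp
  have "\<forall>v. \<exists>F. F \<subseteq> ?N v - S \<and> card F = k v"
    using repair_cost_signed_indicator_div_2_le[OF finV] unfolding k_def
    by (meson nat_le_iff obtain_subset_with_card_n)
  then obtain F where F: "\<And>v. F v \<subseteq> ?N v - S" "\<And>v. card (F v) = k v"
    by metis
  define T where "T = (\<Union>v\<in>V. F v)"
  have "F v \<subseteq> V - S" if "v \<in> V" for v
    using F(1)[of v] closed_nbhd_subset[OF that] by blast
  hence TS: "S \<inter> T = {}" and TV: "T \<subseteq> V" unfolding T_def by auto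
  have "signed_dom_fun V E (signed_indicator (S \<union> T))"
    unfolding signed_dom_fun_signed_indicator_iff
  proof
    fix v assume v: "v \<in> V"
    have "F v \<subseteq> ?N v \<inter> T" using F(1)[of v] v unfolding T_def by auto
    hence "k v \<le> card (?N v \<inter> T)" using F(2) finite_closed_nbhd[OF finV] by (metis card_mono finite_Int)
    moreover have "closed_nbhd_sum V E (signed_indicator (S \<union> T)) v
        = closed_nbhd_sum V E (signed_indicator S) v + 2 * int (card (?N v \<inter> T))"
      unfolding closed_nbhd_sum_def by (rule sum_signed_indicator_Un[OF finite_closed_nbhd[OF finV] TS])
    ultimately show "1 \<le> closed_nbhd_sum V E (signed_indicator (S \<union> T)) v"
      using one_le_closed_nbhd_sum_add_repair_cost[of V E "signed_indicator S" v] k[of v]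
      by linarith
  qed
  moreover have "(\<Sum>v\<in>V. signed_indicator (S \<union> T) v)
      \<le> (\<Sum>v\<in>V. signed_indicator S v) + (\<Sum>v\<in>V. ?c v)"
  proof -
    have "card T \<le> (\<Sum>v\<in>V. k v)"
      unfolding T_def using card_UN_le[OF finV, of F] F(2) by simp
    hence "2 * int (card T) \<le> (\<Sum>v\<in>V. 2 * int (k v))"
      by (simp add: sum_distrib_left[symmetric] flip: of_nat_sum)
    also have "\<dots> \<le> (\<Sum>v\<in>V. ?c v)"
      by (rule sum_mono, unfold k, presburger)
    finally show ?thesis
      using sum_signed_indicator_Un[OF finV TS] TV by (simp add: Int_absorb1)
  qed
  ultimately show ?thesis by blast
qed

section \<open>Random subsets\<close>

definition subset_prob :: "real \<Rightarrow> 'a set \<Rightarrow> 'a set \<Rightarrow> real" where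
  "subset_prob p V S = p ^ card S * (1 - p) ^ card (V - S)"

definition subset_expectation :: "real \<Rightarrow> 'a set \<Rightarrow> ('a set \<Rightarrow> real) \<Rightarrow> real" where
  "subset_expectation p V h = (\<Sum>S\<in>Pow V. subset_prob p V S * h S)"

lemma subset_expectation_prod:
  fixes \<phi> :: "'a \<Rightarrow> bool \<Rightarrow> real"
  assumes "finite V"
  shows "subset_expectation p V (\<lambda>S. \<Prod>x\<in>V. \<phi> x (x \<in> S))
       = (\<Prod>x\<in>V. p * \<phi> x True + (1 - p) * \<phi> x False)"
proof -
  have "(\<Prod>x\<in>V. p * \<phi> x True + (1 - p) * \<phi> x False)
      = (\<Sum>S\<in>Pow V. (\<Prod>x\<in>S. p * \<phi> x True) * (\<Prod>x\<in>V - S. (1 - p) * \<phi> x False))"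
    by (rule prod_add[OF assms])
  also have "\<dots> = (\<Sum>S\<in>Pow V. subset_prob p V S * (\<Prod>x\<in>V. \<phi> x (x \<in> S)))"
  proof (rule sum.cong[OF refl])
    fix S assume "S \<in> Pow V"
    hence "(\<Prod>x\<in>V. \<phi> x (x \<in> S)) = (\<Prod>x\<in>S. \<phi> x (x \<in> S)) * (\<Prod>x\<in>V - S. \<phi> x (x \<in> S))"
      using assms by (metis PowD prod.subset_diff mult.commute)
    also have "\<dots> = (\<Prod>x\<in>S. \<phi> x True) * (\<Prod>x\<in>V - S. \<phi> x False)"
      by (intro arg_cong2[where f="(*)"] prod.cong) auto
    finally show "(\<Prod>x\<in>S. p * \<phi> x True) * (\<Prod>x\<in>V - S. (1 - p) * \<phi> x False)
        = subset_prob p V S * (\<Prod>x\<in>V. \<phi> x (x \<in> S))"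
      unfolding subset_prob_def by (simp add: prod.distrib)
  qed
  finally show ?thesis unfolding subset_expectation_def by simp
qed

lemma subset_expectation_const: "finite V \<Longrightarrow> subset_expectation p V (\<lambda>_. c) = c"
  using subset_expectation_prod[of V p "\<lambda>_ _. 1"]
  by (simp add: subset_expectation_def sum_distrib_right[symmetric])

lemma subset_expectation_cmult:
  "subset_expectation p V (\<lambda>S. c * h S) = c * subset_expectation p V h"
  unfolding subset_expectation_def by (simp add: sum_distrib_left algebra_simps)

lemma subset_expectation_add:
  "subset_expectation p V (\<lambda>S. g S + h S) = subset_expectation p V g + subset_expectation p V h"
  unfolding subset_expectation_def by (simp add: distrib_left sum.distrib)

lemma subset_expectation_sum:
  "subset_expectation p V (\<lambda>S. \<Sum>v\<in>A. h v S) = (\<Sum>v\<in>A. subset_expectation p V (h v))"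
  unfolding subset_expectation_def by (simp add: sum_distrib_left sum.swap[of _ A])

lemma subset_prob_pos: "0 < p \<Longrightarrow> p < 1 \<Longrightarrow> 0 < subset_prob p V S"
  unfolding subset_prob_def by simp

lemma subset_prob_nonneg: "0 \<le> p \<Longrightarrow> p \<le> 1 \<Longrightarrow> 0 \<le> subset_prob p V S"
  unfolding subset_prob_def by simp

lemma subset_expectation_mono:
  assumes "0 \<le> p" "p \<le> 1" and "\<And>S. S \<subseteq> V \<Longrightarrow> g S \<le> h S"
  shows "subset_expectation p V g \<le> subset_expectation p V h"
  unfolding subset_expectation_def
  using assms subset_prob_nonneg[OF assms(1,2)] by (intro sum_mono mult_left_mono) auto

lemma exists_subset_le_subset_expectation:
  assumes "finite V" "0 < p" "p < 1"
  shows "\<exists>S\<subseteq>V. h S \<le> subset_expectation p V h"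
proof (rule ccontr)
  assume "\<not> ?thesis"
  hence "subset_expectation p V (\<lambda>_. subset_expectation p V h) < subset_expectation p V h"
    unfolding subset_expectation_def using assms subset_prob_pos[OF assms(2,3)]
    by (intro sum_strict_mono) (auto intro!: mult_strict_left_mono)
  thus False using subset_expectation_const[OF assms(1)] by simp
qed

lemma subset_expectation_signed_indicator:
  assumes "finite V" "v \<in> V"
  shows "subset_expectation p V (\<lambda>S. real_of_int (signed_indicator S v)) = 2 * p - 1"
proof -
  define \<phi> where "\<phi> x b = (if x = v then if b then 1 else -1 else 1 :: real)" for x b
  have "real_of_int (signed_indicator S v) = (\<Prod>x\<in>V. \<phi> x (x \<in> S))" for S
    using assms by (simp add: \<phi>_def signed_indicator_def)
  hence "subset_expectation p V (\<lambda>S. real_of_int (signed_indicator S v))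
      = subset_expectation p V (\<lambda>S. \<Prod>x\<in>V. \<phi> x (x \<in> S))"
    by simp
  also have "\<dots> = (\<Prod>x\<in>V. p * \<phi> x True + (1 - p) * \<phi> x False)"
    by (rule subset_expectation_prod[OF assms(1)])
  also have "\<dots> = (\<Prod>x\<in>V. if x = v then 2 * p - 1 else 1)"
    by (intro prod.cong) (auto simp: \<phi>_def)
  also have "\<dots> = 2 * p - 1"
    using assms by simp
  finally show ?thesis .
qed

lemma subset_expectation_exp_sum_signed_indicator:
  assumes "finite V" "A \<subseteq> V"
  shows "subset_expectation p V (\<lambda>S. exp (t * (\<Sum>x\<in>A. real_of_int (signed_indicator S x))))
       = (p * exp t + (1 - p) * exp (- t)) ^ card A"
proof -
  define \<phi> where "\<phi> x b = (if x \<in> A then if b then exp t else exp (- t) else 1)" for x b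
  have restrict: "(\<Prod>x\<in>V. if x \<in> A then F x else 1) = (\<Prod>x\<in>A. F x)" for F :: "'a \<Rightarrow> real"
    using prod.inter_restrict[OF assms(1), of F A] assms(2) by (simp add: Int_absorb1)
  have "exp (t * (\<Sum>x\<in>A. real_of_int (signed_indicator S x))) = (\<Prod>x\<in>V. \<phi> x (x \<in> S))" for S
  proof -
    have "exp (t * (\<Sum>x\<in>A. real_of_int (signed_indicator S x)))
        = (\<Prod>x\<in>A. exp (t * real_of_int (signed_indicator S x)))"
      using finite_subset[OF assms(2,1)] by (simp add: sum_distrib_left exp_sum)
    also have "\<dots> = (\<Prod>x\<in>V. \<phi> x (x \<in> S))"
      unfolding \<phi>_def restrict by (intro prod.cong) (auto simp: signed_indicator_def)
    finally show ?thesis .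
  qed
  hence "subset_expectation p V (\<lambda>S. exp (t * (\<Sum>x\<in>A. real_of_int (signed_indicator S x))))
      = (\<Prod>x\<in>V. p * \<phi> x True + (1 - p) * \<phi> x False)"
    by (simp add: subset_expectation_prod[OF assms(1)])
  also have "\<dots> = (\<Prod>x\<in>V. if x \<in> A then p * exp t + (1 - p) * exp (- t) else 1)"
    by (intro prod.cong) (auto simp: \<phi>_def)
  also have "\<dots> = (p * exp t + (1 - p) * exp (- t)) ^ card A"
    unfolding restrict by simp
  finally show ?thesis .
qed

section \<open>Analytic estimates\<close>

lemma exp_minus_le_quadratic:
  fixes y :: real
  assumes "0 \<le> y"
  shows "exp (- y) \<le> 1 - y + y ^ 2 / 2"
proof -
  have pos: "0 < 1 + y + y ^ 2 / 2" using assms by (simp add: add_pos_nonneg)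
  have "(1 - y + y ^ 2 / 2) * (1 + y + y ^ 2 / 2) = 1 + (y ^ 2) ^ 2 / 4"
    by (simp add: field_simps power2_eq_square)
  hence "1 \<le> (1 - y + y ^ 2 / 2) * (1 + y + y ^ 2 / 2)" by simp
  hence "1 / (1 + y + y ^ 2 / 2) \<le> 1 - y + y ^ 2 / 2"
    using pos by (simp add: divide_le_eq)
  moreover have "exp (- y) \<le> 1 / (1 + y + y ^ 2 / 2)"
    using exp_lower_Taylor_quadratic[OF assms] pos by (simp add: exp_minus inverse_eq_divide frac_le)
  ultimately show ?thesis by linarith
qed

lemma biased_exp_mean_le:
  fixes y :: real
  assumes "0 \<le> y" "y \<le> 1"
  shows "(1 + y) / 2 * exp (- y) + (1 - y) / 2 * exp y \<le> 1 - y ^ 2 / 4"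
proof -
  have "(1 + y) / 2 * exp (- y) \<le> (1 + y) / 2 * (1 - y + y ^ 2 / 2)"
    using assms exp_minus_le_quadratic[OF assms(1)] by (intro mult_left_mono) auto
  moreover have "(1 - y) / 2 * exp y \<le> (1 - y) / 2 * (1 + y + y ^ 2)"
    using assms exp_bound[OF assms] by (intro mult_left_mono) auto
  moreover have "(1 + y) / 2 * (1 - y + y ^ 2 / 2) + (1 - y) / 2 * (1 + y + y ^ 2)
      = 1 - y ^ 2 / 4 - y ^ 3 / 4"
    by (simp add: field_simps power2_eq_square power3_eq_cube)
  moreover have "0 \<le> y ^ 3" using assms by simp
  ultimately show ?thesis by linarith
qed

lemma max_0_le_exp_div:
  fixes y z :: real
  assumes "0 < y"
  shows "max 0 z \<le> exp (y * z - 1) / y"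
proof -
  have "y * z \<le> exp (y * z - 1)" using exp_ge_add_one_self[of "y * z - 1"] by simp
  hence "z \<le> exp (y * z - 1) / y" using assms by (simp add: le_divide_eq mult.commute)
  thus ?thesis using assms by simp
qed

lemma two_le_ln:
  fixes D :: real
  assumes "9 \<le> D"
  shows "2 \<le> ln D"
proof -
  have "exp (2::real) = exp 1 ^ 2" using exp_double[of 1] by simp
  also have "\<dots> \<le> 3 ^ 2" using exp_le by (intro power_mono) auto
  finally have "exp 2 \<le> D" using assms by simp
  thus ?thesis using assms by (metis exp_le_cancel_iff exp_ln less_le_trans zero_less_numeral)
qed

lemma ln_mult_28_le:
  fixes D :: real
  assumes "625 \<le> D"
  shows "28 * ln D \<le> D"
proof -
  define r where "r = sqrt (sqrt D)"
  have rpos: "0 < r" unfolding r_def using assms by simp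
  have "r ^ 4 = (r ^ 2) ^ 2" by (simp add: numeral_eq_Suc)
  hence r4: "r ^ 4 = D" using assms by (simp add: r_def)
  have lnD: "ln D = 4 * ln r" unfolding r_def using assms by (simp add: ln_sqrt)
  have r5: "5 \<le> r"
  proof (rule ccontr)
    assume "\<not> 5 \<le> r"
    hence "r ^ 4 < 5 ^ 4" using rpos by (intro power_strict_mono) auto
    thus False using r4 assms by simp
  qed
  have "112 * r \<le> r ^ 3 * r"
    using power_mono[OF r5, of 3] rpos by (intro mult_right_mono) auto
  also have "\<dots> = D" using r4 by (simp add: numeral_eq_Suc)
  finally show ?thesis using lnD ln_le_minus_one[OF rpos] by linarith
qed

text \<open>The parameter \<open>y = \<surd>(6.8 ln D / D)\<close> balances the two terms of the probabilistic
  bound: the factor \<open>6.8/4 > 1\<close> makes \<open>exp (-y\<^sup>2 D / 4) \<le> 1/D\<close>.\<close>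

lemma sqrt_ln_parameter_bounds:
  fixes D :: real
  assumes "625 \<le> D"
  defines "y \<equiv> sqrt (6.8 * ln D) / sqrt D"
  shows "0 < y" and "y \<le> 1/2"
    and "y + exp (- (y ^ 2 * D / 4)) / y \<le> (sqrt (6.8 * ln D) + 0.32) / sqrt D"
proof -
  define a where "a = sqrt (6.8 * ln D)"
  have Dpos: "0 < D" using assms by simp
  have L2: "2 \<le> ln D" using two_le_ln assms by simp
  have a2: "a ^ 2 = 6.8 * ln D" unfolding a_def using L2 by simp
  have apos: "0 < a" unfolding a_def using L2 by simp
  have y: "y = a / sqrt D" unfolding y_def a_def ..
  have y2: "y ^ 2 * D = 6.8 * ln D"
    unfolding y using a2 Dpos by (simp add: power_divide)
  have yD: "y * D = a * sqrt D"
    unfolding y using Dpos by (simp add: field_simps)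
  show ypos: "0 < y" unfolding y using apos Dpos by simp
  have "y ^ 2 * D \<le> D / 4" using y2 L2 ln_mult_28_le[OF assms(1)] by linarith
  hence "y ^ 2 \<le> (1/2) ^ 2"
    using mult_le_cancel_right_pos[OF Dpos, of "y ^ 2" "1/4"] by (simp add: power_divide)
  thus "y \<le> 1/2" by (rule power2_le_imp_le) simp
  have "exp (- (y ^ 2 * D / 4)) \<le> exp (- ln D)" using y2 L2 by simp
  also have "\<dots> = 1 / D" using Dpos by (simp add: exp_minus inverse_eq_divide)
  finally have "exp (- (y ^ 2 * D / 4)) / y \<le> 1 / D / y"
    by (rule divide_right_mono) (use ypos in simp)
  also have "\<dots> = 1 / a / sqrt D" using yD by (simp add: mult.commute)
  also have "\<dots> \<le> 0.32 / sqrt D"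
  proof -
    have "(1 / 0.32) ^ 2 \<le> a ^ 2" unfolding a2 using L2 by (simp add: power_divide)
    hence "1 / 0.32 \<le> a" by (rule power2_le_imp_le) (use apos in simp)
    thus ?thesis using apos Dpos by (intro divide_right_mono) (auto simp: field_simps)
  qed
  finally show "y + exp (- (y ^ 2 * D / 4)) / y \<le> (sqrt (6.8 * ln D) + 0.32) / sqrt D"
    unfolding y a_def[symmetric] by (simp add: add_divide_distrib)
qed

section \<open>The probabilistic bound\<close>

lemma subset_expectation_repair_cost_le:
  assumes sg: "simple_graph V E" and v: "v \<in> V" and y: "0 < y" "y \<le> 1/2"
  shows "subset_expectation ((1 + y) / 2) V (\<lambda>S. real_of_int (repair_cost V E (signed_indicator S) v))
       \<le> exp (- (y ^ 2 * (real (min_degree V E) + 1) / 4)) / y"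
proof -
  let ?p = "(1 + y) / 2"
  let ?N = "closed_nbhd V E v"
  let ?s = "\<lambda>S. \<Sum>x\<in>?N. real_of_int (signed_indicator S x)"
  define q where "q = ?p * exp (- y) + (1 - ?p) * exp y"
  have finV: "finite V" using sg unfolding simple_graph_def by auto
  have p: "0 \<le> ?p" "?p \<le> 1" using y by auto
  have q0: "0 \<le> q" unfolding q_def using p by simp
  have "1 - ?p = (1 - y) / 2" by (simp add: field_simps)
  hence "q = (1 + y) / 2 * exp (- y) + (1 - y) / 2 * exp y" unfolding q_def by (simp only:)
  hence q_le: "q \<le> 1 - y ^ 2 / 4" using biased_exp_mean_le[of y] y by simp
  hence q1: "q \<le> 1" using zero_le_power2[of y] by linarith
  have "subset_expectation ?p V (\<lambda>S. real_of_int (repair_cost V E (signed_indicator S) v))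
      \<le> subset_expectation ?p V (\<lambda>S. exp (2 * y - 1) / y * exp (- y * ?s S))"
  proof (rule subset_expectation_mono[OF p])
    fix S
    have "real_of_int (repair_cost V E (signed_indicator S) v) \<le> max 0 (2 - ?s S)"
      by (simp add: repair_cost_def closed_nbhd_sum_def)
    also have "\<dots> \<le> exp (y * (2 - ?s S) - 1) / y" by (rule max_0_le_exp_div[OF y(1)])
    also have "\<dots> = exp (2 * y - 1) / y * exp (- y * ?s S)"
      by (simp add: exp_add[symmetric] algebra_simps)
    finally show "real_of_int (repair_cost V E (signed_indicator S) v)
        \<le> exp (2 * y - 1) / y * exp (- y * ?s S)" .
  qed
  also have "\<dots> = exp (2 * y - 1) / y * subset_expectation ?p V (\<lambda>S. exp (- y * ?s S))"
    by (rule subset_expectation_cmult)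
  also have "\<dots> = exp (2 * y - 1) / y * q ^ card ?N"
    using subset_expectation_exp_sum_signed_indicator[OF finV closed_nbhd_subset[OF v], of ?p "- y"]
    by (simp add: q_def)
  also have "\<dots> \<le> 1 / y * exp (- (y ^ 2 / 4)) ^ (min_degree V E + 1)"
  proof (rule mult_mono)
    show "exp (2 * y - 1) / y \<le> 1 / y" using y by (simp add: divide_right_mono)
    have "q ^ card ?N \<le> q ^ (min_degree V E + 1)"
      using q0 q1 card_closed_nbhd_ge_min_degree[OF sg v] by (intro power_decreasing) auto
    also have "\<dots> \<le> exp (- (y ^ 2 / 4)) ^ (min_degree V E + 1)"
      using q0 q_le exp_ge_add_one_self[of "- (y ^ 2 / 4)"] by (intro power_mono) auto
    finally show "q ^ card ?N \<le> exp (- (y ^ 2 / 4)) ^ (min_degree V E + 1)" .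
  qed (use y q0 in auto)
  also have "\<dots> = exp (- (y ^ 2 * (real (min_degree V E) + 1) / 4)) / y"
    unfolding exp_of_nat_mult[symmetric] by (simp add: algebra_simps)
  finally show ?thesis .
qed

theorem signed_domination_number_le_exp_bound:
  assumes sg: "simple_graph V E" and y: "0 < y" "y \<le> 1/2"
  shows "real_of_int (signed_domination_number V E)
       \<le> (y + exp (- (y ^ 2 * (real (min_degree V E) + 1) / 4)) / y) * real (card V)"
proof -
  let ?p = "(1 + y) / 2"
  let ?b = "exp (- (y ^ 2 * (real (min_degree V E) + 1) / 4)) / y"
  define cost where "cost S = real_of_int ((\<Sum>v\<in>V. signed_indicator S v)
    + (\<Sum>v\<in>V. repair_cost V E (signed_indicator S) v))" for S
  have finV: "finite V" using sg unfolding simple_graph_def by auto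
  have "subset_expectation ?p V cost
      = (\<Sum>v\<in>V. subset_expectation ?p V (\<lambda>S. real_of_int (signed_indicator S v))
          + subset_expectation ?p V (\<lambda>S. real_of_int (repair_cost V E (signed_indicator S) v)))"
    unfolding cost_def by (simp add: subset_expectation_add subset_expectation_sum sum.distrib)
  also have "\<dots> \<le> (\<Sum>v\<in>V. y + ?b)"
  proof (rule sum_mono)
    fix v assume v: "v \<in> V"
    have "2 * ?p - 1 = y" by (simp add: field_simps)
    thus "subset_expectation ?p V (\<lambda>S. real_of_int (signed_indicator S v))
        + subset_expectation ?p V (\<lambda>S. real_of_int (repair_cost V E (signed_indicator S) v)) \<le> y + ?b"
      using subset_expectation_signed_indicator[OF finV v, of ?p] subset_expectation_repair_cost_le[OF sg v y]
      by linarith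
  qed
  finally have "subset_expectation ?p V cost \<le> (y + ?b) * real (card V)" by (simp add: mult.commute)
  obtain S where S: "cost S \<le> subset_expectation ?p V cost"
    using exists_subset_le_subset_expectation[OF finV, of ?p cost] y by auto
  obtain f where f: "signed_dom_fun V E f"
    "(\<Sum>v\<in>V. f v) \<le> (\<Sum>v\<in>V. signed_indicator S v) + (\<Sum>v\<in>V. repair_cost V E (signed_indicator S) v)"
    using exists_signed_dom_fun_le_repair_cost[OF finV, of E S] by blast
  have "signed_domination_number V E
      \<le> (\<Sum>v\<in>V. signed_indicator S v) + (\<Sum>v\<in>V. repair_cost V E (signed_indicator S) v)"
    using signed_domination_number_le[OF finV f(1)] f(2) by linarith
  hence "real_of_int (signed_domination_number V E) \<le> cost S"
    unfolding cost_def by (simp only: of_int_le_iff)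
  also note S
  also note \<open>subset_expectation ?p V cost \<le> (y + ?b) * real (card V)\<close>
  finally show ?thesis .
qed

theorem corollary1:
  fixes V :: "'a set" and E :: "'a \<Rightarrow> 'a \<Rightarrow> bool"
  assumes "simple_graph V E"
    and "V \<noteq> {}"
    and "min_degree V E \<ge> 24000"
  shows "real_of_int (signed_domination_number V E)
     \<le> (sqrt (6.8 * ln (real (min_degree V E) + 1)) + 0.32)
         / sqrt (real (min_degree V E) + 1) * real (card V)"
proof -
  define D where "D = real (min_degree V E) + 1"
  define y where "y = sqrt (6.8 * ln D) / sqrt D"
  have "625 \<le> D" unfolding D_def using assms(3) by simp
  note y = sqrt_ln_parameter_bounds[OF this, folded y_def]
  have "real_of_int (signed_domination_number V E) \<le> (y + exp (- (y ^ 2 * D / 4)) / y) * real (card V)"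
    using signed_domination_number_le_exp_bound[OF assms(1) y(1,2)] unfolding D_def .
  also have "\<dots> \<le> (sqrt (6.8 * ln D) + 0.32) / sqrt D * real (card V)"
    using y(3) by (rule mult_right_mono) simp
  finally show ?thesis unfolding D_def .
qed

end
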